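(* Let $V$ be $\eta_*$-regular and $\mu_V=\frac1N\sum_i\delta_{V_i}$. For every $p\ge2$ and every $a+bi\in\mathcal D_*$: if $a\ge0$ then $\displaystyle\int\frac{d\mu_V(x)}{|x-a-bi|^p}\asymp\frac{\sqrt{a+b}}{b^{p-1}}$; if $a\le0$ then $\displaystyle\int\frac{d\mu_V(x)}{|x-a-bi|^p}\asymp\frac{1}{(|a|+b)^{p-3/2}}$.
   Context: $V=\mathrm{diag}(V_1\le\dots\le V_N)$ deterministic real, $m_V(z)=\frac1N\sum_i(V_i-z)^{-1}$. $V$ is $\eta_*$-regular ($\eta_*=N^{-\phi_*}$, $0<\phi_*\le2/3$) if for some $C_V$: $C_V^{-1}\frac{\eta}{\sqrt{|E|+\eta}}\le\mathrm{Im}\,m_V(E+i\eta)\le C_V\frac{\eta}{\sqrt{|E|+\eta}}$ for $-1\le E\le0$, $\eta_*\le\eta\le10$; $C_V^{-1}\sqrt{|E|+\eta}\le\mathrm{Im}\,m_V\le C_V\sqrt{|E|+\eta}$ for $0\le E\le1$, $\eta_*^{1/2}\sqrt{|E|}+\eta_*\le\eta\le10$; no $V_i\in[-1,-\eta_*]$; $\|V\|\le N^{C_V}$. $\mathcal D_*=\{E+i\eta:-3/4\le E\le0,\,2\eta_*\le\eta\le10\}\cup\{E+i\eta:0\le E\le3/4,\,\eta_*^{1/2}\sqrt{|E|}+\eta_*\le\eta\le10\}\cup\{E+i\eta:-3/4\le E\le-2\eta_*,\,0\le\eta\le10\}$. $\asymp$ holds with constants depending only on $C_V$ and $p$. *)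

theory Defs
  imports Complex_Main
begin

(* V = diag(V_0 <= ... <= V_{N-1}), indices 0-based: i < N *)

definition eta_star :: "nat \<Rightarrow> real \<Rightarrow> real" where
  "eta_star N phi = real N powr (- phi)"

definition m_V :: "nat \<Rightarrow> (nat \<Rightarrow> real) \<Rightarrow> complex \<Rightarrow> complex" where
  "m_V N V z = (1 / of_nat N) * (\<Sum>i<N. 1 / (complex_of_real (V i) - z))"

definition regular :: "nat \<Rightarrow> real \<Rightarrow> real \<Rightarrow> (nat \<Rightarrow> real) \<Rightarrow> bool" where
  "regular N phi CV V \<longleftrightarrow>
     N \<ge> 1 \<and> 0 < phi \<and> phi \<le> 2/3 \<and>
     (\<forall>i j. i \<le> j \<longrightarrow> j < N \<longrightarrow> V i \<le> V j) \<and>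
     (\<forall>E \<eta>. -1 \<le> E \<and> E \<le> 0 \<and> eta_star N phi \<le> \<eta> \<and> \<eta> \<le> 10 \<longrightarrow>
        (1/CV) * (\<eta> / sqrt (\<bar>E\<bar> + \<eta>)) \<le> Im (m_V N V (Complex E \<eta>)) \<and>
        Im (m_V N V (Complex E \<eta>)) \<le> CV * (\<eta> / sqrt (\<bar>E\<bar> + \<eta>))) \<and>
     (\<forall>E \<eta>. 0 \<le> E \<and> E \<le> 1 \<and> sqrt (eta_star N phi) * sqrt \<bar>E\<bar> + eta_star N phi \<le> \<eta> \<and> \<eta> \<le> 10 \<longrightarrow>
        (1/CV) * sqrt (\<bar>E\<bar> + \<eta>) \<le> Im (m_V N V (Complex E \<eta>)) \<and>
        Im (m_V N V (Complex E \<eta>)) \<le> CV * sqrt (\<bar>E\<bar> + \<eta>)) \<and>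
     (\<forall>i<N. V i \<notin> {-1 .. - eta_star N phi}) \<and>
     (\<forall>i<N. \<bar>V i\<bar> \<le> real N powr CV)"

definition D_star :: "nat \<Rightarrow> real \<Rightarrow> complex set" where
  "D_star N phi =
     {Complex E \<eta> | E \<eta>. -3/4 \<le> E \<and> E \<le> 0 \<and> 2 * eta_star N phi \<le> \<eta> \<and> \<eta> \<le> 10}
   \<union> {Complex E \<eta> | E \<eta>. 0 \<le> E \<and> E \<le> 3/4 \<and>
        sqrt (eta_star N phi) * sqrt \<bar>E\<bar> + eta_star N phi \<le> \<eta> \<and> \<eta> \<le> 10}
   \<union> {Complex E \<eta> | E \<eta>. -3/4 \<le> E \<and> E \<le> - 2 * eta_star N phi \<and> 0 \<le> \<eta> \<and> \<eta> \<le> 10}"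

definition moment :: "nat \<Rightarrow> (nat \<Rightarrow> real) \<Rightarrow> real \<Rightarrow> complex \<Rightarrow> real" where
  "moment N V p z = (1 / real N) * (\<Sum>i<N. 1 / (cmod (complex_of_real (V i) - z) powr p))"

end

theory Submission
  imports Defs
begin

(*
  Write L(E, h) = (1/N) * sum_i 1 / ((V_i - E)^2 + h^2), so that Im m_V(E + ih) = h * L(E, h) and
  regularity reads L(a, h) ~ sqrt(a + h) / h for a >= 0 and L(a, h) ~ 1 / sqrt(|a| + h) for a <= 0.
  The moment is the mean of t_i^(-p/2), where t_i = (V_i - a)^2 + b^2.

  Upper bound: t_i^(-p/2) = t_i^(1-p/2) / t_i <= W^(1-p/2) / t_i for any W <= t_i, and 1 / t_i is
  comparable to the Lorentzian weight at a height h, namely h = b for a >= 0 and h ~ |a| + b for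
  a <= 0; in the latter case, when b < |a|, the spectral gap [-1, -eta_*] keeps every V_i at distance
  at least |a|/3 from a, so that t_i ~ (V_i - a)^2 + (|a| + b)^2.

  Lower bound: the V_i at distance more than R = K h from a carry Lorentzian mass at most 2 L(a, R),
  which regularity makes at most L(a, h) / 4 once K is a large multiple of C_V^4; the remaining V_i
  have t_i <= (K^2 + 1) h^2. When K h leaves the range of regularity, all quantities are of order
  one and a constant R, with the trivial tail bound 1/R^2, does the job.
*)

definition lorentz_mean :: "nat \<Rightarrow> (nat \<Rightarrow> real) \<Rightarrow> real \<Rightarrow> real \<Rightarrow> real" where
  "lorentz_mean N V E h = (1 / real N) * (\<Sum>i<N. 1 / ((V i - E)^2 + h^2))"

lemma lorentz_mean_nonneg: "0 \<le> lorentz_mean N V E h"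
  unfolding lorentz_mean_def by (intro mult_nonneg_nonneg sum_nonneg) simp_all

lemma Im_m_V_Complex: "Im (m_V N V (Complex E h)) = h * lorentz_mean N V E h"
proof -
  have Im_term: "Im (1 / (complex_of_real (V i) - Complex E h)) = h * (1 / ((V i - E)^2 + h^2))" for i
    by (simp add: Im_divide power2_eq_square)
  have "(1 / of_nat N :: complex) * z = z / complex_of_real (real N)" for z
    by simp
  then have "Im (m_V N V (Complex E h)) =
      (1 / real N) * (\<Sum>i<N. Im (1 / (complex_of_real (V i) - Complex E h)))"
    unfolding m_V_def Im_divide_of_real Im_sum by simp
  then show ?thesis
    unfolding lorentz_mean_def Im_term by (simp add: sum_distrib_left)
qed

lemma moment_Complex:
  "moment N V p (Complex a b) = (1 / real N) * (\<Sum>i<N. ((V i - a)^2 + b^2) powr (-(p/2)))"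
proof -
  have "1 / cmod (complex_of_real (V i) - Complex a b) powr p = ((V i - a)^2 + b^2) powr (-(p/2))" for i
    by (simp add: cmod_def powr_half_sqrt[symmetric] powr_powr powr_minus_divide)
  then show ?thesis unfolding moment_def by simp
qed

lemma moment_nonneg: "0 \<le> moment N V p z"
  unfolding moment_def by (intro mult_nonneg_nonneg sum_nonneg) simp_all

lemma powr_minus_eq_powr_div: "0 < (t::real) \<Longrightarrow> t powr (-q) = t powr (1 - q) / t"
  by (simp add: powr_diff powr_minus_divide)

lemma square_powr_scale:
  fixes x y p :: real
  assumes x: "0 < x"
  shows "y / x * (x^2) powr (1 - p/2) = y / x powr (p - 1)"
    and "y / sqrt x * (x^2) powr (1 - p/2) = y / x powr (p - 3/2)"
proof -
  have "(x^2) powr (1 - p/2) = (x powr 2) powr (1 - p/2)" using x by simp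
  also have "\<dots> = x powr (2 - p)" by (simp add: powr_powr algebra_simps)
  finally have sq: "(x^2) powr (1 - p/2) = x powr (2 - p)" .
  have "y / x powr e * x powr (2 - p) = y / x powr (p - 2 + e)" for e
  proof -
    have "x powr (2 - p) / x powr e = 1 / x powr (p - 2 + e)"
      by (simp add: powr_diff[symmetric] powr_minus_divide[symmetric])
    then show ?thesis by (metis divide_divide_eq_right mult.commute times_divide_eq_right mult_1_right)
  qed
  from this[of 1] this[of "1/2"] show
    "y / x * (x^2) powr (1 - p/2) = y / x powr (p - 1)"
    "y / sqrt x * (x^2) powr (1 - p/2) = y / x powr (p - 3/2)"
    using x unfolding sq by (simp_all add: powr_half_sqrt)
qed

lemma powr_neg_le_bound:
  fixes t W d M q :: real
  assumes q: "1 \<le> q" and W: "0 < W" "W \<le> t" and d: "0 < d" "d \<le> M * t"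
  shows "t powr (-q) \<le> M * (1 / d) * W powr (1 - q)"
proof -
  have t: "0 < t" using W by linarith
  have "1 / t \<le> M * (1 / d)" using d t by (simp add: field_simps)
  moreover have "t powr (1 - q) \<le> W powr (1 - q)" using W q by (intro powr_mono2') auto
  ultimately have "1 / t * t powr (1 - q) \<le> M * (1 / d) * W powr (1 - q)"
    using t by (intro mult_mono) (auto intro: order_trans[of 0 "1 / t"])
  then show ?thesis using t by (simp add: powr_minus_eq_powr_div)
qed

lemma scaled_lower_bound:
  fixes c C X m :: real
  assumes "0 < c" "1 / c \<le> C" "0 \<le> X" "c * X \<le> m"
  shows "1 / C * X \<le> m"
proof -
  have "inverse C \<le> inverse (1 / c)" using assms(1,2) by (intro le_imp_inverse_le) auto
  then have "1 / C \<le> c" by (simp add: inverse_eq_divide)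
  then show ?thesis using assms(3,4) by (meson mult_right_mono order_trans)
qed

lemma two_sided_bound_of_cases:
  fixes c c' U X m :: real
  assumes c: "0 < c" "0 < c'" and X: "0 \<le> X" and upper: "m \<le> U * X"
    and lower: "c * X \<le> m \<or> c' * X \<le> m"
  shows "1 / max U (max (1 / c) (1 / c')) * X \<le> m \<and> m \<le> max U (max (1 / c) (1 / c')) * X"
proof
  show "1 / max U (max (1 / c) (1 / c')) * X \<le> m"
    using lower
  proof
    assume "c * X \<le> m"
    then show ?thesis by (rule scaled_lower_bound[OF c(1) _ X, rotated]) simp
  next
    assume "c' * X \<le> m"
    then show ?thesis by (rule scaled_lower_bound[OF c(2) _ X, rotated]) simp
  qed
  have "U * X \<le> max U (max (1 / c) (1 / c')) * X" using X by (intro mult_right_mono) auto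
  with upper show "m \<le> max U (max (1 / c) (1 / c')) * X" by linarith
qed

lemma two_sided_bound_mono:
  fixes C C' X m :: real
  assumes C: "0 < C" "C \<le> C'" and m: "0 \<le> m" and bound: "1 / C * X \<le> m \<and> m \<le> C * X"
  shows "1 / C' * X \<le> m \<and> m \<le> C' * X"
proof -
  have X: "0 \<le> X" using bound m C(1) by (smt (verit) mult_pos_neg)
  have "1 / C' * X \<le> 1 / C * X" using C X by (intro mult_right_mono divide_left_mono) auto
  moreover have "C * X \<le> C' * X" using C X by (intro mult_right_mono) auto
  ultimately show ?thesis using bound by linarith
qed

lemma moment_le_lorentz_mean:
  assumes p: "2 \<le> p" and W: "0 < W" and h: "0 < h"
    and W_le: "\<And>i. i < N \<Longrightarrow> W \<le> (V i - a)^2 + b^2"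
    and M_ge: "\<And>i. i < N \<Longrightarrow> (V i - a)^2 + h^2 \<le> M * ((V i - a)^2 + b^2)"
  shows "moment N V p (Complex a b) \<le> M * lorentz_mean N V a h * W powr (1 - p/2)"
proof -
  have "((V i - a)^2 + b^2) powr (-(p/2)) \<le> M * (1 / ((V i - a)^2 + h^2)) * W powr (1 - p/2)"
    if "i < N" for i
    using p W W_le[OF that] M_ge[OF that] h by (intro powr_neg_le_bound) (auto intro: add_nonneg_pos)
  then have "(\<Sum>i<N. ((V i - a)^2 + b^2) powr (-(p/2)))
      \<le> M * (\<Sum>i<N. 1 / ((V i - a)^2 + h^2)) * W powr (1 - p/2)"
    by (auto intro: sum_mono simp: sum_distrib_left sum_distrib_right mult.assoc)
  then show ?thesis
    unfolding moment_Complex lorentz_mean_def by (simp add: divide_right_mono mult.left_commute)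
qed

definition lorentz_tail :: "nat \<Rightarrow> (nat \<Rightarrow> real) \<Rightarrow> real \<Rightarrow> real \<Rightarrow> real \<Rightarrow> real" where
  "lorentz_tail N V E h R = (1 / real N) * (\<Sum>i | i < N \<and> R^2 < (V i - E)^2. 1 / ((V i - E)^2 + h^2))"

lemma lorentz_tail_le_inverse_square:
  assumes "0 < R"
  shows "lorentz_tail N V E h R \<le> 1 / R^2"
proof -
  let ?A = "{i. i < N \<and> R^2 < (V i - E)^2}"
  have "(\<Sum>i\<in>?A. 1 / ((V i - E)^2 + h^2)) \<le> (\<Sum>i\<in>?A. 1 / R^2)"
    using assms by (intro sum_mono frac_le) (auto intro: add_increasing2 less_imp_le)
  also have "\<dots> \<le> real N / R^2"
  proof -
    have "card ?A \<le> N" using card_mono[of "{..<N}" ?A] by auto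
    then show ?thesis by (simp add: divide_right_mono)
  qed
  finally have "(1 / real N) * (\<Sum>i\<in>?A. 1 / ((V i - E)^2 + h^2)) \<le> (1 / real N) * (real N / R^2)"
    by (rule mult_left_mono) simp
  then show ?thesis unfolding lorentz_tail_def by (cases "N = 0") auto
qed

lemma lorentz_tail_le_lorentz_mean:
  assumes "0 < R"
  shows "lorentz_tail N V E h R \<le> 2 * lorentz_mean N V E R"
proof -
  let ?A = "{i. i < N \<and> R^2 < (V i - E)^2}"
  have "(\<Sum>i\<in>?A. 1 / ((V i - E)^2 + h^2)) \<le> (\<Sum>i\<in>?A. 2 / ((V i - E)^2 + R^2))"
  proof (intro sum_mono)
    fix i assume "i \<in> ?A"
    then have "R^2 < (V i - E)^2" by simp
    then have "(V i - E)^2 + R^2 \<le> 2 * ((V i - E)^2 + h^2)"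
      using zero_le_power2[of h] by (smt (verit))
    moreover have "0 < (V i - E)^2 + R^2" using assms by (simp add: add_nonneg_pos)
    ultimately have "2 / (2 * ((V i - E)^2 + h^2)) \<le> 2 / ((V i - E)^2 + R^2)"
      by (intro divide_left_mono mult_pos_pos) auto
    then show "1 / ((V i - E)^2 + h^2) \<le> 2 / ((V i - E)^2 + R^2)"
      by (metis mult.right_neutral nonzero_mult_divide_mult_cancel_left zero_neq_numeral)
  qed
  also have "\<dots> \<le> (\<Sum>i<N. 2 / ((V i - E)^2 + R^2))"
    using assms by (intro sum_mono2) (auto intro: add_nonneg_pos)
  also have "\<dots> = 2 * (\<Sum>i<N. 1 / ((V i - E)^2 + R^2))" by (simp add: sum_distrib_left)
  finally have "(1 / real N) * (\<Sum>i\<in>?A. 1 / ((V i - E)^2 + h^2))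
      \<le> (1 / real N) * (2 * (\<Sum>i<N. 1 / ((V i - E)^2 + R^2)))"
    by (rule mult_left_mono) simp
  then show ?thesis unfolding lorentz_tail_def lorentz_mean_def by simp
qed

lemma moment_ge_near_mass:
  assumes p: "2 \<le> p" and h: "0 < h" and b: "0 \<le> b" "b \<le> h" and R: "0 < R"
    and t_pos: "\<And>i. i < N \<Longrightarrow> 0 < (V i - a)^2 + b^2"
  shows "(lorentz_mean N V a h - lorentz_tail N V a h R) * (R^2 + h^2) powr (1 - p/2)
           \<le> moment N V p (Complex a b)"
proof -
  let ?A = "{i. i < N \<and> R^2 < (V i - a)^2}"
  let ?B = "{i. i < N \<and> \<not> R^2 < (V i - a)^2}"
  let ?f = "\<lambda>i. 1 / ((V i - a)^2 + h^2)"
  have "{..<N} = ?A \<union> ?B" by auto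
  then have "(\<Sum>i<N. ?f i) = (\<Sum>i\<in>?A. ?f i) + (\<Sum>i\<in>?B. ?f i)"
    by (simp add: sum.union_disjoint[symmetric] Int_def)
  then have near: "lorentz_mean N V a h - lorentz_tail N V a h R = (1 / real N) * (\<Sum>i\<in>?B. ?f i)"
    unfolding lorentz_mean_def lorentz_tail_def by (simp add: algebra_simps)
  have "?f i * (R^2 + h^2) powr (1 - p/2) \<le> ((V i - a)^2 + b^2) powr (-(p/2))" if i: "i \<in> ?B" for i
  proof -
    define t where "t = (V i - a)^2 + b^2"
    define d where "d = (V i - a)^2 + h^2"
    have t: "0 < t" using t_pos i unfolding t_def by auto
    have td: "t \<le> d" unfolding t_def d_def using b by (simp add: power_mono)
    have dR: "d \<le> R^2 + h^2" using i unfolding d_def by auto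
    have "1 / d * (R^2 + h^2) powr (1 - p/2) \<le> 1 / d * d powr (1 - p/2)"
      using t td dR p by (intro mult_left_mono powr_mono2') auto
    also have "\<dots> = d powr (-(p/2))" using t td by (simp add: powr_minus_eq_powr_div)
    also have "\<dots> \<le> t powr (-(p/2))" using t td p by (intro powr_mono2') auto
    finally show ?thesis unfolding t_def d_def .
  qed
  then have "(\<Sum>i\<in>?B. ?f i) * (R^2 + h^2) powr (1 - p/2) \<le> (\<Sum>i\<in>?B. ((V i - a)^2 + b^2) powr (-(p/2)))"
    unfolding sum_distrib_right by (rule sum_mono) simp
  also have "\<dots> \<le> (\<Sum>i<N. ((V i - a)^2 + b^2) powr (-(p/2)))"
    by (intro sum_mono2) auto
  finally show ?thesis
    unfolding near moment_Complex using mult_left_mono[of _ _ "1 / real N"] by (fastforce simp: mult.assoc)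
qed

lemma moment_ge_of_lorentz_decay:
  assumes p: "2 \<le> p" and h: "0 < h" and b: "0 \<le> b" "b \<le> h" and K: "0 < K"
    and t_pos: "\<And>i. i < N \<Longrightarrow> 0 < (V i - a)^2 + b^2"
    and decay: "4 * lorentz_mean N V a (K * h) \<le> lorentz_mean N V a h"
  shows "lorentz_mean N V a h / 2 * ((K^2 + 1) * h^2) powr (1 - p/2) \<le> moment N V p (Complex a b)"
proof -
  have Kh: "0 < K * h" using K h by simp
  have "lorentz_tail N V a h (K * h) \<le> 2 * lorentz_mean N V a (K * h)"
    by (rule lorentz_tail_le_lorentz_mean[OF Kh])
  with decay have near: "lorentz_mean N V a h / 2 \<le> lorentz_mean N V a h - lorentz_tail N V a h (K * h)"
    by linarith
  have sq: "(K^2 + 1) * h^2 = (K * h)^2 + h^2" by (simp add: power_mult_distrib algebra_simps)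
  have "lorentz_mean N V a h / 2 * ((K^2 + 1) * h^2) powr (1 - p/2)
      \<le> (lorentz_mean N V a h - lorentz_tail N V a h (K * h)) * ((K * h)^2 + h^2) powr (1 - p/2)"
    unfolding sq by (rule mult_right_mono[OF near]) simp
  also have "\<dots> \<le> moment N V p (Complex a b)"
    by (rule moment_ge_near_mass[OF p h b Kh t_pos])
  finally show ?thesis .
qed

lemma moment_ge_bounded_regime:
  assumes p: "2 \<le> p" and CV: "0 < CV" and h: "0 < h" "h \<le> 10" and b: "0 \<le> b" "b \<le> h"
    and t_pos: "\<And>i. i < N \<Longrightarrow> 0 < (V i - a)^2 + b^2"
    and mass: "1 / (4 * CV) \<le> lorentz_mean N V a h"
  shows "(8 * CV + 100) powr (1 - p/2) / (8 * CV) \<le> moment N V p (Complex a b)"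
proof -
  define R where "R = sqrt (8 * CV)"
  have R: "0 < R" "R^2 = 8 * CV" unfolding R_def using CV by auto
  have "lorentz_tail N V a h R \<le> 1 / (8 * CV)"
    using lorentz_tail_le_inverse_square[OF R(1)] unfolding R(2) .
  with mass have near: "1 / (8 * CV) \<le> lorentz_mean N V a h - lorentz_tail N V a h R" by simp
  have "h^2 \<le> 10^2" using h by (intro power_mono) auto
  then have far: "(8 * CV + 100) powr (1 - p/2) \<le> (R^2 + h^2) powr (1 - p/2)"
    using R p CV by (intro powr_mono2') (auto intro: add_pos_nonneg)
  have "(8 * CV + 100) powr (1 - p/2) / (8 * CV) = 1 / (8 * CV) * (8 * CV + 100) powr (1 - p/2)" by simp
  also have "\<dots> \<le> (lorentz_mean N V a h - lorentz_tail N V a h R) * (R^2 + h^2) powr (1 - p/2)"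
  proof (rule mult_mono[OF near far])
    show "0 \<le> lorentz_mean N V a h - lorentz_tail N V a h R"
      using CV near by (smt (verit) divide_pos_pos)
  qed simp
  also have "\<dots> \<le> moment N V p (Complex a b)"
    by (rule moment_ge_near_mass[OF p h(1) b R(1) t_pos])
  finally show ?thesis .
qed

lemma regular_eta_star_pos: "regular N phi CV V \<Longrightarrow> 0 < eta_star N phi"
  unfolding regular_def eta_star_def by simp

lemma regular_gap: "regular N phi CV V \<Longrightarrow> i < N \<Longrightarrow> V i < -1 \<or> - eta_star N phi < V i"
  unfolding regular_def by force

lemma regular_right_height_pos:
  assumes "regular N phi CV V" "0 \<le> E" "sqrt (eta_star N phi) * sqrt E + eta_star N phi \<le> h"
  shows "0 < h"
proof -
  have "0 \<le> sqrt (eta_star N phi) * sqrt E" using assms regular_eta_star_pos[OF assms(1)] by simp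
  then show ?thesis using assms regular_eta_star_pos[OF assms(1)] by (metis add_nonneg_pos order_less_le_trans)
qed

lemma regular_lorentz_mean_right:
  assumes reg: "regular N phi CV V" and E: "0 \<le> E" "E \<le> 1"
    and h: "sqrt (eta_star N phi) * sqrt E + eta_star N phi \<le> h" "h \<le> 10"
  shows "sqrt (E + h) / (CV * h) \<le> lorentz_mean N V E h \<and> lorentz_mean N V E h \<le> CV * sqrt (E + h) / h"
proof -
  have h0: "0 < h" by (rule regular_right_height_pos[OF reg E(1) h(1)])
  have clause: "\<forall>E \<eta>. 0 \<le> E \<and> E \<le> 1 \<and> sqrt (eta_star N phi) * sqrt \<bar>E\<bar> + eta_star N phi \<le> \<eta> \<and> \<eta> \<le> 10 \<longrightarrow>
        (1/CV) * sqrt (\<bar>E\<bar> + \<eta>) \<le> Im (m_V N V (Complex E \<eta>)) \<and>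
        Im (m_V N V (Complex E \<eta>)) \<le> CV * sqrt (\<bar>E\<bar> + \<eta>)"
    using reg unfolding regular_def by blast
  have "(1/CV) * sqrt (\<bar>E\<bar> + h) \<le> Im (m_V N V (Complex E h)) \<and>
      Im (m_V N V (Complex E h)) \<le> CV * sqrt (\<bar>E\<bar> + h)"
    by (rule clause[rule_format]) (use E h in auto)
  then have lo: "(1/CV) * sqrt (E + h) \<le> h * lorentz_mean N V E h"
    and up: "h * lorentz_mean N V E h \<le> CV * sqrt (E + h)"
    unfolding Im_m_V_Complex abs_of_nonneg[OF E(1)] by auto
  have "sqrt (E + h) / (CV * h) = (1/CV) * sqrt (E + h) / h" by simp
  also have "\<dots> \<le> h * lorentz_mean N V E h / h" by (rule divide_right_mono[OF lo]) (use h0 in simp)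
  also have "\<dots> = lorentz_mean N V E h" using h0 by simp
  finally show ?thesis using up h0 by (simp add: pos_le_divide_eq mult.commute)
qed

lemma regular_lorentz_mean_left:
  assumes reg: "regular N phi CV V" and E: "-1 \<le> E" "E \<le> 0" and h: "eta_star N phi \<le> h" "h \<le> 10"
  shows "1 / (CV * sqrt (\<bar>E\<bar> + h)) \<le> lorentz_mean N V E h \<and> lorentz_mean N V E h \<le> CV / sqrt (\<bar>E\<bar> + h)"
proof -
  have h0: "0 < h" using h(1) regular_eta_star_pos[OF reg] by linarith
  have clause: "\<forall>E \<eta>. -1 \<le> E \<and> E \<le> 0 \<and> eta_star N phi \<le> \<eta> \<and> \<eta> \<le> 10 \<longrightarrow>
        (1/CV) * (\<eta> / sqrt (\<bar>E\<bar> + \<eta>)) \<le> Im (m_V N V (Complex E \<eta>)) \<and>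
        Im (m_V N V (Complex E \<eta>)) \<le> CV * (\<eta> / sqrt (\<bar>E\<bar> + \<eta>))"
    using reg unfolding regular_def by blast
  have "(1/CV) * (h / sqrt (\<bar>E\<bar> + h)) \<le> Im (m_V N V (Complex E h)) \<and>
      Im (m_V N V (Complex E h)) \<le> CV * (h / sqrt (\<bar>E\<bar> + h))"
    by (rule clause[rule_format]) (use E h in auto)
  moreover have "(1/CV) * (h / sqrt (\<bar>E\<bar> + h)) = h * (1 / (CV * sqrt (\<bar>E\<bar> + h)))"
    and "CV * (h / sqrt (\<bar>E\<bar> + h)) = h * (CV / sqrt (\<bar>E\<bar> + h))" by simp_all
  ultimately show ?thesis
    unfolding Im_m_V_Complex using h0 by (metis mult_le_cancel_left_pos)
qed

lemma regular_left_distance: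
  assumes reg: "regular N phi CV V" and i: "i < N" and a: "-3/4 \<le> a" "a \<le> 0" and b: "0 \<le> b"
    and gap: "b < \<bar>a\<bar> \<Longrightarrow> 2 * eta_star N phi \<le> \<bar>a\<bar>"
  shows "(V i - a)^2 + (\<bar>a\<bar> + b)^2 \<le> 36 * ((V i - a)^2 + b^2)"
proof (cases "b < \<bar>a\<bar>")
  case True
  have "\<bar>a\<bar> / 3 \<le> \<bar>V i - a\<bar>"
    using regular_gap[OF reg i] gap[OF True] a by auto
  then have "\<bar>a\<bar>^2 \<le> 9 * (V i - a)^2"
    using power_mono[of "\<bar>a\<bar> / 3" "\<bar>V i - a\<bar>" 2] by (simp add: power_divide)
  moreover have "(\<bar>a\<bar> + b)^2 \<le> 2 * \<bar>a\<bar>^2 + 2 * b^2"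
    using zero_le_power2[of "\<bar>a\<bar> - b"] by (simp add: power2_eq_square algebra_simps)
  ultimately show ?thesis using zero_le_power2[of b] zero_le_power2[of "V i - a"] by (smt (verit))
next
  case False
  then have "(\<bar>a\<bar> + b)^2 \<le> (2 * b)^2" by (intro power_mono) auto
  then have "(\<bar>a\<bar> + b)^2 \<le> 4 * b^2" by (simp add: power_mult_distrib)
  then show ?thesis using zero_le_power2[of "V i - a"] zero_le_power2[of b] by (smt (verit))
qed

lemma regular_left_distance_pos:
  assumes reg: "regular N phi CV V" and i: "i < N" and a: "-3/4 \<le> a" "a \<le> 0" and b: "0 \<le> b"
    and gap: "b < \<bar>a\<bar> \<Longrightarrow> 2 * eta_star N phi \<le> \<bar>a\<bar>" and w: "0 < \<bar>a\<bar> + b"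
  shows "0 < (V i - a)^2 + b^2"
  using regular_left_distance[OF reg i a b gap] w zero_le_power2[of "V i - a"]
  by (smt (verit) zero_less_power)

lemma D_star_nonneg_part:
  assumes "Complex a b \<in> D_star N phi" "0 \<le> a" "0 < eta_star N phi"
  shows "a \<le> 3/4 \<and> sqrt (eta_star N phi) * sqrt a + eta_star N phi \<le> b \<and> b \<le> 10"
  using assms unfolding D_star_def by auto

lemma D_star_nonpos_part:
  assumes "Complex a b \<in> D_star N phi" "a \<le> 0" "0 < eta_star N phi"
  shows "-3/4 \<le> a \<and> 0 \<le> b \<and> b \<le> 10 \<and> eta_star N phi \<le> \<bar>a\<bar> + b \<and> eta_star N phi \<le> 10 \<and>
    (b < \<bar>a\<bar> \<longrightarrow> 2 * eta_star N phi \<le> \<bar>a\<bar>)"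
  using assms unfolding D_star_def by auto

lemma regular_lorentz_decay_right:
  assumes reg: "regular N phi CV V" and CV: "0 < CV" and a: "0 \<le> a" "a \<le> 1"
    and b: "sqrt (eta_star N phi) * sqrt a + eta_star N phi \<le> b"
    and K: "1 \<le> K" "16 * CV^4 \<le> K" and Kb: "K * b \<le> 10"
  shows "4 * lorentz_mean N V a (K * b) \<le> lorentz_mean N V a b"
proof -
  have b0: "0 < b" by (rule regular_right_height_pos[OF reg a(1) b])
  have "b \<le> K * b" using K(1) b0 by simp
  then have b10: "b \<le> 10" and bK: "sqrt (eta_star N phi) * sqrt a + eta_star N phi \<le> K * b"
    using Kb b by linarith+
  have "lorentz_mean N V a (K * b) \<le> CV * sqrt (a + K * b) / (K * b)"
    using regular_lorentz_mean_right[OF reg a bK Kb] by blast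
  also have "\<dots> \<le> CV * (sqrt K * sqrt (a + b)) / (K * b)"
  proof -
    have "a \<le> K * a" using mult_right_mono[OF K(1) a(1)] by simp
    then have "a + K * b \<le> K * (a + b)" by (simp add: distrib_left)
    then have "sqrt (a + K * b) \<le> sqrt K * sqrt (a + b)" by (simp add: real_sqrt_mult[symmetric])
    then show ?thesis using CV K b0 by (simp add: divide_right_mono)
  qed
  also have "\<dots> = (CV^2 / sqrt K) * (sqrt (a + b) / (CV * b))"
  proof -
    have "K = sqrt K * sqrt K" using K by simp
    then show ?thesis using CV K b0 by (simp add: field_simps power2_eq_square)
  qed
  finally have "4 * lorentz_mean N V a (K * b) \<le> (4 * CV^2 / sqrt K) * (sqrt (a + b) / (CV * b))"
    by simp
  also have "\<dots> \<le> 1 * (sqrt (a + b) / (CV * b))"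
  proof (rule mult_right_mono)
    have "(4 * CV^2)^2 \<le> K" using K(2) by (simp add: power_mult_distrib power2_eq_square power4_eq_xxxx)
    then have "4 * CV^2 \<le> sqrt K" by (rule real_le_rsqrt)
    then show "4 * CV^2 / sqrt K \<le> 1" using K by simp
  qed (use CV b0 a in simp)
  also have "\<dots> \<le> lorentz_mean N V a b"
    using regular_lorentz_mean_right[OF reg a b b10] by simp
  finally show ?thesis .
qed

lemma moment_right_le:
  assumes reg: "regular N phi CV V" and p: "2 \<le> p" and a: "0 \<le> a" "a \<le> 1"
    and b: "sqrt (eta_star N phi) * sqrt a + eta_star N phi \<le> b" "b \<le> 10"
  shows "moment N V p (Complex a b) \<le> CV * (sqrt (a + b) / b powr (p - 1))"
proof -
  have b0: "0 < b" by (rule regular_right_height_pos[OF reg a(1) b(1)])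
  have "moment N V p (Complex a b) \<le> 1 * lorentz_mean N V a b * (b^2) powr (1 - p/2)"
    using b0 by (intro moment_le_lorentz_mean[OF p]) auto
  also have "\<dots> \<le> CV * sqrt (a + b) / b * (b^2) powr (1 - p/2)"
    by (rule mult_right_mono) (use regular_lorentz_mean_right[OF reg a b] in auto)
  also have "\<dots> = CV * (sqrt (a + b) / b powr (p - 1))"
    using square_powr_scale(1)[OF b0, of "CV * sqrt (a + b)" p] by simp
  finally show ?thesis .
qed

lemma moment_right_ge_decay:
  assumes reg: "regular N phi CV V" and CV: "0 < CV" and p: "2 \<le> p" and a: "0 \<le> a" "a \<le> 1"
    and b: "sqrt (eta_star N phi) * sqrt a + eta_star N phi \<le> b"
    and K: "1 \<le> K" "16 * CV^4 \<le> K" and Kb: "K * b \<le> 10"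
  shows "(K^2 + 1) powr (1 - p/2) / (2 * CV) * (sqrt (a + b) / b powr (p - 1)) \<le> moment N V p (Complex a b)"
proof -
  define P where "P = (b^2) powr (1 - p/2)"
  define Q where "Q = (K^2 + 1) powr (1 - p/2)"
  have b0: "0 < b" by (rule regular_right_height_pos[OF reg a(1) b])
  have "b \<le> K * b" using K(1) b0 by simp
  then have "b \<le> 10" using Kb by linarith
  then have L_b: "sqrt (a + b) / (CV * b) \<le> lorentz_mean N V a b"
    using regular_lorentz_mean_right[OF reg a b] by blast
  have "((K^2 + 1) * b^2) powr (1 - p/2) = Q * P" unfolding P_def Q_def using K by (simp add: powr_mult)
  moreover have "sqrt (a + b) / b powr (p - 1) = sqrt (a + b) / b * P"
    unfolding P_def by (rule square_powr_scale(1)[OF b0, symmetric])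
  ultimately have "Q / (2 * CV) * (sqrt (a + b) / b powr (p - 1))
      = sqrt (a + b) / (CV * b) / 2 * ((K^2 + 1) * b^2) powr (1 - p/2)"
    by (simp add: mult_ac)
  also have "\<dots> \<le> lorentz_mean N V a b / 2 * ((K^2 + 1) * b^2) powr (1 - p/2)"
    by (intro mult_right_mono divide_right_mono L_b) auto
  also have "\<dots> \<le> moment N V p (Complex a b)"
    using b0 K regular_lorentz_decay_right[OF reg CV a b K Kb]
    by (intro moment_ge_of_lorentz_decay[OF p b0]) (auto intro: add_nonneg_pos)
  finally show ?thesis unfolding Q_def .
qed

lemma moment_right_ge_bounded:
  assumes reg: "regular N phi CV V" and CV: "0 < CV" and p: "2 \<le> p" and a: "0 \<le> a" "a \<le> 3/4"
    and b: "sqrt (eta_star N phi) * sqrt a + eta_star N phi \<le> b" "b \<le> 10"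
    and K: "0 < K" and Kb: "10 \<le> K * b"
  shows "(8 * CV + 100) powr (1 - p/2) / (8 * CV) * ((10 / K) powr (p - 1) / 4)
           * (sqrt (a + b) / b powr (p - 1)) \<le> moment N V p (Complex a b)"
proof -
  define M where "M = (8 * CV + 100) powr (1 - p/2) / (8 * CV)"
  have b0: "0 < b" by (rule regular_right_height_pos[OF reg a(1) b(1)])
  have sqrt_ab: "sqrt (a + b) \<le> 4" using real_sqrt_le_mono[of "a + b" "4^2"] a b by simp
  have "1 / (4 * CV) \<le> 1 / (CV * sqrt (a + b))" using sqrt_ab CV a b0 by (simp add: frac_le)
  also have "\<dots> \<le> sqrt (a + b) / (CV * b)"
    using CV a b0 by (simp add: field_simps real_sqrt_mult[symmetric])
  also have "\<dots> \<le> lorentz_mean N V a b"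
    using regular_lorentz_mean_right[OF reg a(1) _ b] a by simp
  finally have M: "M \<le> moment N V p (Complex a b)"
    unfolding M_def using b0 by (intro moment_ge_bounded_regime[OF p CV b0 b(2)]) (auto intro: add_nonneg_pos)
  have "10 / K \<le> b" using Kb K by (simp add: divide_le_eq mult.commute)
  then have "1 / b powr (p - 1) \<le> 1 / (10 / K) powr (p - 1)"
    using K p b0 by (intro divide_left_mono powr_mono2) auto
  with sqrt_ab have "sqrt (a + b) * (1 / b powr (p - 1)) \<le> 4 * (1 / (10 / K) powr (p - 1))"
    by (intro mult_mono) auto
  then have "(10 / K) powr (p - 1) / 4 * (sqrt (a + b) / b powr (p - 1)) \<le> 1"
    using K by (simp add: field_simps)
  then have "M * ((10 / K) powr (p - 1) / 4 * (sqrt (a + b) / b powr (p - 1))) \<le> M * 1"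
    using CV unfolding M_def by (intro mult_left_mono) auto
  then show ?thesis using M unfolding M_def by (simp add: mult.assoc)
qed

lemma moment_asymp_right:
  assumes CV: "0 < CV" and p: "2 \<le> p"
  obtains C where "0 < C"
    and "\<And>N phi V a b. regular N phi CV V \<Longrightarrow> Complex a b \<in> D_star N phi \<Longrightarrow> 0 \<le> a \<Longrightarrow>
      1 / C * (sqrt (a + b) / b powr (p - 1)) \<le> moment N V p (Complex a b) \<and>
      moment N V p (Complex a b) \<le> C * (sqrt (a + b) / b powr (p - 1))"
proof -
  define K where "K = 16 * CV^4 + 1"
  define c where "c = (K^2 + 1) powr (1 - p/2) / (2 * CV)"
  define c' where "c' = (8 * CV + 100) powr (1 - p/2) / (8 * CV) * ((10 / K) powr (p - 1) / 4)"
  have K: "1 \<le> K" "16 * CV^4 \<le> K" unfolding K_def by simp_all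
  have "0 < K^2 + 1" by (intro add_nonneg_pos) simp_all
  then have pos: "0 < c" "0 < c'" unfolding c_def c'_def using CV K by simp_all
  show ?thesis
  proof (rule that[of "max CV (max (1 / c) (1 / c'))"])
    show "0 < max CV (max (1 / c) (1 / c'))" using CV by simp
    fix N phi V a b
    assume reg: "regular N phi CV V" and mem: "Complex a b \<in> D_star N phi" and a: "0 \<le> a"
    have ab: "a \<le> 3/4" "sqrt (eta_star N phi) * sqrt a + eta_star N phi \<le> b" "b \<le> 10"
      using D_star_nonneg_part[OF mem a regular_eta_star_pos[OF reg]] by auto
    have a1: "a \<le> 1" using ab(1) by simp
    show "1 / max CV (max (1 / c) (1 / c')) * (sqrt (a + b) / b powr (p - 1)) \<le> moment N V p (Complex a b) \<and>
      moment N V p (Complex a b) \<le> max CV (max (1 / c) (1 / c')) * (sqrt (a + b) / b powr (p - 1))"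
    proof (rule two_sided_bound_of_cases[OF pos])
      show "0 \<le> sqrt (a + b) / b powr (p - 1)"
        using a regular_right_height_pos[OF reg a ab(2)] by simp
      show "moment N V p (Complex a b) \<le> CV * (sqrt (a + b) / b powr (p - 1))"
        by (rule moment_right_le[OF reg p a a1 ab(2,3)])
      show "c * (sqrt (a + b) / b powr (p - 1)) \<le> moment N V p (Complex a b) \<or>
          c' * (sqrt (a + b) / b powr (p - 1)) \<le> moment N V p (Complex a b)"
        unfolding c_def c'_def using K
          moment_right_ge_decay[OF reg CV p a a1 ab(2) K]
          moment_right_ge_bounded[OF reg CV p a ab(1) ab(2,3)]
        by (cases "K * b \<le> 10") auto
    qed
  qed
qed

lemma regular_lorentz_decay_left:
  assumes reg: "regular N phi CV V" and CV: "0 < CV" and a: "-1 \<le> a" "a \<le> 0"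
    and h: "eta_star N phi \<le> h" "\<bar>a\<bar> \<le> h"
    and K: "1 \<le> K" "32 * CV^4 \<le> K" and Kh: "K * h \<le> 10"
  shows "4 * lorentz_mean N V a (K * h) \<le> lorentz_mean N V a h"
proof -
  define s where "s = sqrt (\<bar>a\<bar> + h)"
  have h0: "0 < h" using h(1) regular_eta_star_pos[OF reg] by linarith
  have Kh0: "0 < K * h" using K h0 by simp
  have s0: "0 < s" unfolding s_def using h0 by simp
  have "h \<le> K * h" using K(1) h0 by simp
  then have h10: "h \<le> 10" and Kh_eta: "eta_star N phi \<le> K * h" using Kh h(1) by linarith+
  have "4 * lorentz_mean N V a (K * h) \<le> 4 * (CV / sqrt (\<bar>a\<bar> + K * h))"
    using regular_lorentz_mean_left[OF reg a Kh_eta Kh] by simp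
  also have "\<dots> \<le> 4 * CV / sqrt (K * h)"
    using CV Kh0 by (simp add: divide_left_mono real_sqrt_le_mono mult_pos_pos)
  also have "\<dots> \<le> 1 / (CV * s)"
  proof -
    have "(4 * CV^2 * s)^2 = 16 * CV^4 * (\<bar>a\<bar> + h)"
      unfolding s_def using h0 by (simp add: power_mult_distrib power2_eq_square power4_eq_xxxx)
    also have "\<dots> \<le> 16 * CV^4 * (2 * h)" using h(2) by (intro mult_left_mono) auto
    also have "\<dots> \<le> K * h" using K(2) h0 by (simp add: mult_right_mono)
    finally have "4 * CV^2 * s \<le> sqrt (K * h)" by (rule real_le_rsqrt)
    then show ?thesis using CV s0 Kh0 by (simp add: field_simps power2_eq_square)
  qed
  also have "\<dots> \<le> lorentz_mean N V a h"
    unfolding s_def using regular_lorentz_mean_left[OF reg a h(1) h10] by simp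
  finally show ?thesis .
qed

lemma moment_left_le:
  assumes reg: "regular N phi CV V" and CV: "0 < CV" and p: "2 \<le> p"
    and a: "-3/4 \<le> a" "a \<le> 0" and b: "0 \<le> b"
    and gap: "b < \<bar>a\<bar> \<Longrightarrow> 2 * eta_star N phi \<le> \<bar>a\<bar>"
    and h: "eta_star N phi \<le> h" "h \<le> 10" "h \<le> \<bar>a\<bar> + b" "\<bar>a\<bar> + b \<le> 2 * h"
  shows "moment N V p (Complex a b) \<le> 6 powr p * sqrt 2 * CV * (1 / (\<bar>a\<bar> + b) powr (p - 3/2))"
proof -
  define w where "w = \<bar>a\<bar> + b"
  have h0: "0 < h" using h(1) regular_eta_star_pos[OF reg] by linarith
  have w0: "0 < w" using h0 h(3) unfolding w_def by linarith
  have dist: "(V i - a)^2 + w^2 \<le> 36 * ((V i - a)^2 + b^2)" if "i < N" for i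
    using regular_left_distance[OF reg that a b gap] unfolding w_def .
  have hw: "h^2 \<le> w^2" using h0 h(3) unfolding w_def by (intro power_mono) auto
  have "moment N V p (Complex a b) \<le> 36 * lorentz_mean N V a h * (w^2 / 36) powr (1 - p/2)"
  proof (rule moment_le_lorentz_mean[OF p _ h0])
    show "0 < w^2 / 36" using w0 by simp
    fix i assume "i < N"
    note d = dist[OF this]
    have "w^2 \<le> 36 * ((V i - a)^2 + b^2)"
      using d zero_le_power2[of "V i - a"] by (smt (verit))
    then show "w^2 / 36 \<le> (V i - a)^2 + b^2" by simp
    show "(V i - a)^2 + h^2 \<le> 36 * ((V i - a)^2 + b^2)"
      using d hw by (smt (verit))
  qed
  also have "\<dots> \<le> 36 * (sqrt 2 * CV / sqrt w) * (w^2 / 36) powr (1 - p/2)"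
  proof -
    have "sqrt w \<le> sqrt (2 * (\<bar>a\<bar> + h))" using h(4) unfolding w_def by simp
    also have "\<dots> = sqrt 2 * sqrt (\<bar>a\<bar> + h)" by (rule real_sqrt_mult)
    finally have "CV / sqrt (\<bar>a\<bar> + h) \<le> sqrt 2 * CV / sqrt w"
      using CV w0 h0 by (simp add: field_simps)
    then have "lorentz_mean N V a h \<le> sqrt 2 * CV / sqrt w"
      using regular_lorentz_mean_left[OF reg _ a(2) h(1,2)] a by linarith
    then show ?thesis by (intro mult_right_mono mult_left_mono) auto
  qed
  also have "\<dots> = 36 / 36 powr (1 - p/2) * (sqrt 2 * CV / sqrt w * (w^2) powr (1 - p/2))"
    by (simp add: powr_divide mult_ac)
  also have "36 / 36 powr (1 - p/2) = 6 powr p"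
  proof -
    have "36 / 36 powr (1 - p/2) = 36 powr (p/2)" by (simp add: powr_diff)
    also have "\<dots> = (6 powr 2) powr (p/2)" by simp
    finally show ?thesis by (simp add: powr_powr)
  qed
  also have "sqrt 2 * CV / sqrt w * (w^2) powr (1 - p/2) = sqrt 2 * CV / w powr (p - 3/2)"
    by (rule square_powr_scale(2)[OF w0])
  finally show ?thesis unfolding w_def by simp
qed

lemma moment_left_ge_decay:
  assumes reg: "regular N phi CV V" and CV: "0 < CV" and p: "2 \<le> p"
    and a: "-3/4 \<le> a" "a \<le> 0" and b: "0 \<le> b"
    and gap: "b < \<bar>a\<bar> \<Longrightarrow> 2 * eta_star N phi \<le> \<bar>a\<bar>"
    and h: "eta_star N phi \<le> h" "b \<le> h" "\<bar>a\<bar> \<le> h" "h \<le> \<bar>a\<bar> + b"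
    and K: "1 \<le> K" "32 * CV^4 \<le> K" and Kh: "K * h \<le> 10"
  shows "(K^2 + 1) powr (1 - p/2) / (2 * sqrt 2 * CV) * (1 / (\<bar>a\<bar> + b) powr (p - 3/2))
           \<le> moment N V p (Complex a b)"
proof -
  define w where "w = \<bar>a\<bar> + b"
  define Q where "Q = (K^2 + 1) powr (1 - p/2)"
  have a1: "-1 \<le> a" using a(1) by simp
  have h0: "0 < h" using h(1) regular_eta_star_pos[OF reg] by linarith
  have w0: "0 < w" using h0 h(4) unfolding w_def by linarith
  have "h \<le> K * h" using K(1) h0 by simp
  then have h10: "h \<le> 10" using Kh by linarith
  have "sqrt (\<bar>a\<bar> + h) \<le> sqrt 2 * sqrt w"
    unfolding w_def using h(4) b by (simp add: real_sqrt_mult[symmetric])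
  then have "1 / (2 * sqrt 2 * CV * sqrt w) \<le> 1 / (2 * CV * sqrt (\<bar>a\<bar> + h))"
    using CV w0 h0 by (intro divide_left_mono) (auto intro: mult_pos_pos)
  also have "\<dots> \<le> lorentz_mean N V a h / 2"
    using regular_lorentz_mean_left[OF reg a1 a(2) h(1) h10] by simp
  finally have L_w: "1 / (2 * sqrt 2 * CV * sqrt w) \<le> lorentz_mean N V a h / 2" .
  have "Q / (2 * sqrt 2 * CV) * (1 / w powr (p - 3/2))
      = Q / (2 * sqrt 2 * CV) * (1 / sqrt w * (w^2) powr (1 - p/2))"
    by (simp only: square_powr_scale(2)[OF w0])
  also have "\<dots> = 1 / (2 * sqrt 2 * CV * sqrt w) * (Q * (w^2) powr (1 - p/2))"
    by (simp add: mult_ac)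
  also have "\<dots> \<le> lorentz_mean N V a h / 2 * ((K^2 + 1) * h^2) powr (1 - p/2)"
  proof (rule mult_mono[OF L_w])
    have "0 < K^2 + 1" by (intro add_nonneg_pos) simp_all
    moreover have "h^2 \<le> w^2" using h0 h(4) unfolding w_def by (intro power_mono) auto
    ultimately have "((K^2 + 1) * w^2) powr (1 - p/2) \<le> ((K^2 + 1) * h^2) powr (1 - p/2)"
      using p h0 by (intro powr_mono2') (simp_all add: mult_left_mono)
    then show "Q * (w^2) powr (1 - p/2) \<le> ((K^2 + 1) * h^2) powr (1 - p/2)"
      unfolding Q_def by (simp add: powr_mult)
  qed (use lorentz_mean_nonneg in \<open>auto simp: Q_def\<close>)
  also have "\<dots> \<le> moment N V p (Complex a b)"
    using K regular_lorentz_decay_left[OF reg CV a1 a(2) h(1,3) K Kh]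
      regular_left_distance_pos[OF reg _ a b gap] w0
    by (intro moment_ge_of_lorentz_decay[OF p h0 b h(2)]) (auto simp: w_def)
  finally show ?thesis unfolding Q_def w_def .
qed

lemma moment_left_ge_bounded:
  assumes reg: "regular N phi CV V" and CV: "0 < CV" and p: "2 \<le> p"
    and a: "-3/4 \<le> a" "a \<le> 0" and b: "0 \<le> b"
    and gap: "b < \<bar>a\<bar> \<Longrightarrow> 2 * eta_star N phi \<le> \<bar>a\<bar>"
    and h: "eta_star N phi \<le> h" "h \<le> 10" "b \<le> h" "h \<le> \<bar>a\<bar> + b"
    and K: "0 < K" and Kh: "10 \<le> K * h"
  shows "(8 * CV + 100) powr (1 - p/2) / (8 * CV) * (10 / K) powr (p - 3/2)
           * (1 / (\<bar>a\<bar> + b) powr (p - 3/2)) \<le> moment N V p (Complex a b)"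
proof -
  define M where "M = (8 * CV + 100) powr (1 - p/2) / (8 * CV)"
  have h0: "0 < h" using h(1) regular_eta_star_pos[OF reg] by linarith
  have "sqrt (\<bar>a\<bar> + h) \<le> 4" using real_sqrt_le_mono[of "\<bar>a\<bar> + h" "4^2"] h(2) a by simp
  then have "1 / (4 * CV) \<le> 1 / (CV * sqrt (\<bar>a\<bar> + h))" using CV h0 by (simp add: frac_le)
  also have "\<dots> \<le> lorentz_mean N V a h"
    using regular_lorentz_mean_left[OF reg _ a(2) h(1,2)] a(1) by simp
  finally have M: "M \<le> moment N V p (Complex a b)"
    unfolding M_def using regular_left_distance_pos[OF reg _ a b gap] h0 h(4)
    by (intro moment_ge_bounded_regime[OF p CV h0 h(2) b h(3)]) auto
  have "K * h \<le> K * (\<bar>a\<bar> + b)" using K h(4) by (intro mult_left_mono) auto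
  then have "10 \<le> K * (\<bar>a\<bar> + b)" using Kh by linarith
  then have "10 / K \<le> \<bar>a\<bar> + b" using K by (simp add: divide_le_eq mult.commute)
  moreover have "0 < \<bar>a\<bar> + b" using h0 h(4) by linarith
  ultimately have "1 / (\<bar>a\<bar> + b) powr (p - 3/2) \<le> 1 / (10 / K) powr (p - 3/2)"
    using K p by (intro divide_left_mono powr_mono2) auto
  then have "(10 / K) powr (p - 3/2) * (1 / (\<bar>a\<bar> + b) powr (p - 3/2)) \<le> 1"
    using K by (simp add: field_simps)
  then have "M * ((10 / K) powr (p - 3/2) * (1 / (\<bar>a\<bar> + b) powr (p - 3/2))) \<le> M * 1"
    using CV unfolding M_def by (intro mult_left_mono) auto
  then show ?thesis using M unfolding M_def by (simp add: mult.assoc)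
qed

lemma moment_asymp_left:
  assumes CV: "0 < CV" and p: "2 \<le> p"
  obtains C where "0 < C"
    and "\<And>N phi V a b. regular N phi CV V \<Longrightarrow> Complex a b \<in> D_star N phi \<Longrightarrow> a \<le> 0 \<Longrightarrow>
      1 / C * (1 / (\<bar>a\<bar> + b) powr (p - 3/2)) \<le> moment N V p (Complex a b) \<and>
      moment N V p (Complex a b) \<le> C * (1 / (\<bar>a\<bar> + b) powr (p - 3/2))"
proof -
  define K where "K = 32 * CV^4 + 1"
  define c where "c = (K^2 + 1) powr (1 - p/2) / (2 * sqrt 2 * CV)"
  define c' where "c' = (8 * CV + 100) powr (1 - p/2) / (8 * CV) * (10 / K) powr (p - 3/2)"
  define U where "U = 6 powr p * sqrt 2 * CV"
  have K: "1 \<le> K" "32 * CV^4 \<le> K" unfolding K_def by simp_all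
  have "0 < K^2 + 1" by (intro add_nonneg_pos) simp_all
  then have pos: "0 < c" "0 < c'" unfolding c_def c'_def using CV K by simp_all
  show ?thesis
  proof (rule that[of "max U (max (1 / c) (1 / c'))"])
    show "0 < max U (max (1 / c) (1 / c'))" using pos by (simp add: less_max_iff_disj)
    fix N phi V a b
    assume reg: "regular N phi CV V" and mem: "Complex a b \<in> D_star N phi" and a: "a \<le> 0"
    \<comment> \<open>regularity is only available at heights up to 10, while \<open>\<bar>a\<bar> + b\<close> may reach 43/4\<close>
    define h where "h = min (\<bar>a\<bar> + b) 10"
    have ab: "-3/4 \<le> a" "0 \<le> b" "b \<le> 10" "eta_star N phi \<le> \<bar>a\<bar> + b" "eta_star N phi \<le> 10"
      and gap: "b < \<bar>a\<bar> \<Longrightarrow> 2 * eta_star N phi \<le> \<bar>a\<bar>"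
      using D_star_nonpos_part[OF mem a regular_eta_star_pos[OF reg]] by auto
    have h: "eta_star N phi \<le> h" "h \<le> 10" "b \<le> h" "\<bar>a\<bar> \<le> h" "h \<le> \<bar>a\<bar> + b" "\<bar>a\<bar> + b \<le> 2 * h"
      unfolding h_def using ab a by (auto simp: min_def)
    show "1 / max U (max (1 / c) (1 / c')) * (1 / (\<bar>a\<bar> + b) powr (p - 3/2)) \<le> moment N V p (Complex a b) \<and>
      moment N V p (Complex a b) \<le> max U (max (1 / c) (1 / c')) * (1 / (\<bar>a\<bar> + b) powr (p - 3/2))"
    proof (rule two_sided_bound_of_cases[OF pos])
      show "0 \<le> 1 / (\<bar>a\<bar> + b) powr (p - 3/2)" by simp
      show "moment N V p (Complex a b) \<le> U * (1 / (\<bar>a\<bar> + b) powr (p - 3/2))"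
        unfolding U_def by (rule moment_left_le[OF reg CV p ab(1) a ab(2) gap h(1,2,5,6)])
      show "c * (1 / (\<bar>a\<bar> + b) powr (p - 3/2)) \<le> moment N V p (Complex a b) \<or>
          c' * (1 / (\<bar>a\<bar> + b) powr (p - 3/2)) \<le> moment N V p (Complex a b)"
        unfolding c_def c'_def using K
          moment_left_ge_decay[OF reg CV p ab(1) a ab(2) gap h(1,3,4,5) K]
          moment_left_ge_bounded[OF reg CV p ab(1) a ab(2) gap h(1,2,3,5)]
        by (cases "K * h \<le> 10") auto
    qed
  qed
qed

theorem lemmaC1:
  fixes CV p :: real
  assumes "0 < CV" and "2 \<le> p"
  shows "\<exists>C>0. \<forall>N phi V a b.
           regular N phi CV V \<longrightarrow> Complex a b \<in> D_star N phi \<longrightarrow>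
           (0 \<le> a \<longrightarrow>
              (1/C) * (sqrt (a + b) / b powr (p - 1)) \<le> moment N V p (Complex a b) \<and>
              moment N V p (Complex a b) \<le> C * (sqrt (a + b) / b powr (p - 1))) \<and>
           (a \<le> 0 \<longrightarrow>
              (1/C) * (1 / (\<bar>a\<bar> + b) powr (p - 3/2)) \<le> moment N V p (Complex a b) \<and>
              moment N V p (Complex a b) \<le> C * (1 / (\<bar>a\<bar> + b) powr (p - 3/2)))"
proof -
  obtain C\<^sub>r where C\<^sub>r: "0 < C\<^sub>r" and right: "\<And>N phi V a b. regular N phi CV V \<Longrightarrow>
      Complex a b \<in> D_star N phi \<Longrightarrow> 0 \<le> a \<Longrightarrow>
      1 / C\<^sub>r * (sqrt (a + b) / b powr (p - 1)) \<le> moment N V p (Complex a b) \<and>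
      moment N V p (Complex a b) \<le> C\<^sub>r * (sqrt (a + b) / b powr (p - 1))"
    using moment_asymp_right[OF assms] by blast
  obtain C\<^sub>l where C\<^sub>l: "0 < C\<^sub>l" and left: "\<And>N phi V a b. regular N phi CV V \<Longrightarrow>
      Complex a b \<in> D_star N phi \<Longrightarrow> a \<le> 0 \<Longrightarrow>
      1 / C\<^sub>l * (1 / (\<bar>a\<bar> + b) powr (p - 3/2)) \<le> moment N V p (Complex a b) \<and>
      moment N V p (Complex a b) \<le> C\<^sub>l * (1 / (\<bar>a\<bar> + b) powr (p - 3/2))"
    using moment_asymp_left[OF assms] by blast
  show ?thesis
    using two_sided_bound_mono[OF C\<^sub>r max.cobounded1 moment_nonneg right]
      two_sided_bound_mono[OF C\<^sub>l max.cobounded2 moment_nonneg left] C\<^sub>r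
    by (intro exI[of _ "max C\<^sub>r C\<^sub>l"]) auto
qed

end
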